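(* Let $T,S\in\mathcal{B}_A(\mathcal{H})$ be $A$-selfadjoint (i.e. $AT$ and $AS$ are selfadjoint). Then $$\omega_A(T+S)\le\sqrt{\omega_A^2(T+iS)+\omega_A(ST)+\|T\|_A\|S\|_A}\le\omega_A(T)+\omega_A(S).$$
   Context: $\mathcal{H}$ is a complex Hilbert space with inner product $\langle\cdot,\cdot\rangle$, and $A$ is a fixed nonzero positive bounded operator on $\mathcal{H}$. Set $\langle x,y\rangle_A=\langle Ax,y\rangle$ and $\|x\|_A=\|A^{1/2}x\|$. $\mathcal{B}_A(\mathcal{H})$ is the set of bounded operators $T$ for which there exists a bounded $S$ with $\langle Tx,y\rangle_A=\langle x,Sy\rangle_A$ for all $x,y$. For an operator $T$ with $\|Tx\|_A\le\lambda\|x\|_A$ for some $\lambda>0$ and all $x$, $\|T\|_A=\sup\{\|Tx\|_A: \|x\|_A=1\}$, and $\omega_A(T)=\sup\{|\langle Tx,x\rangle_A|:\|x\|_A=1\}$. *)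

theory Defs
  imports "HOL-Analysis.Analysis"
begin

text \<open>Complex Hilbert spaces are not available in the distribution, so we introduce
  them as a type class: a complex vector space with a complex inner product
  (linear in the first argument, conjugate-linear in the second), complete with
  respect to the induced norm.\<close>

class chilbert = ab_group_add +
  fixes scaleC :: "complex \<Rightarrow> 'a \<Rightarrow> 'a" (infixr \<open>*\<^sub>C\<close> 75)
    and cinner :: "'a \<Rightarrow> 'a \<Rightarrow> complex"
  assumes scaleC_add_right: "a *\<^sub>C (x + y) = a *\<^sub>C x + a *\<^sub>C y"
    and scaleC_add_left: "(a + b) *\<^sub>C x = a *\<^sub>C x + b *\<^sub>C x"
    and scaleC_scaleC: "a *\<^sub>C (b *\<^sub>C x) = (a * b) *\<^sub>C x"
    and scaleC_one: "1 *\<^sub>C x = x"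
    and cinner_conj: "cinner x y = cnj (cinner y x)"
    and cinner_add_left: "cinner (x + y) z = cinner x z + cinner y z"
    and cinner_scaleC_left: "cinner (a *\<^sub>C x) y = a * cinner x y"
    and cinner_self_real: "Im (cinner x x) = 0"
    and cinner_self_nonneg: "0 \<le> Re (cinner x x)"
    and cinner_self_eq_zero: "cinner x x = 0 \<Longrightarrow> x = 0"
    and hilbert_complete:
      "(\<forall>e>0. \<exists>N. \<forall>m\<ge>N. \<forall>n\<ge>N. sqrt (Re (cinner (X m - X n) (X m - X n))) < e)
        \<Longrightarrow> \<exists>L. (\<lambda>n. sqrt (Re (cinner (X n - L) (X n - L)))) \<longlonglongrightarrow> 0"

definition hnorm :: "'a::chilbert \<Rightarrow> real" where
  "hnorm x = sqrt (Re (cinner x x))"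

definition bounded_op :: "('a::chilbert \<Rightarrow> 'a) \<Rightarrow> bool" where
  "bounded_op T \<longleftrightarrow> (\<forall>x y. T (x + y) = T x + T y) \<and> (\<forall>c x. T (c *\<^sub>C x) = c *\<^sub>C T x)
     \<and> (\<exists>K. \<forall>x. hnorm (T x) \<le> K * hnorm x)"

definition positive_op :: "('a::chilbert \<Rightarrow> 'a) \<Rightarrow> bool" where
  "positive_op A \<longleftrightarrow> bounded_op A \<and> (\<forall>x. Im (cinner (A x) x) = 0 \<and> 0 \<le> Re (cinner (A x) x))"

text \<open>Semi-inner product \<open>\<langle>x,y\<rangle>_A = \<langle>Ax,y\<rangle>\<close> and seminorm
  \<open>\<parallel>x\<parallel>_A = \<parallel>A^{1/2}x\<parallel> = sqrt \<langle>Ax,x\<rangle>\<close>.\<close>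
definition cinnerA :: "('a::chilbert \<Rightarrow> 'a) \<Rightarrow> 'a \<Rightarrow> 'a \<Rightarrow> complex" where
  "cinnerA A x y = cinner (A x) y"

definition normA :: "('a::chilbert \<Rightarrow> 'a) \<Rightarrow> 'a \<Rightarrow> real" where
  "normA A x = sqrt (Re (cinnerA A x x))"

definition BA :: "('a::chilbert \<Rightarrow> 'a) \<Rightarrow> ('a \<Rightarrow> 'a) set" where
  "BA A = {T. bounded_op T \<and>
     (\<exists>S. bounded_op S \<and> (\<forall>x y. cinnerA A (T x) y = cinnerA A x (S y)))}"

definition A_selfadjoint :: "('a::chilbert \<Rightarrow> 'a) \<Rightarrow> ('a \<Rightarrow> 'a) \<Rightarrow> bool" where
  "A_selfadjoint A T \<longleftrightarrow> (\<forall>x y. cinner (A (T x)) y = cinner x (A (T y)))"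

definition opnormA :: "('a::chilbert \<Rightarrow> 'a) \<Rightarrow> ('a \<Rightarrow> 'a) \<Rightarrow> real" where
  "opnormA A T = Sup {normA A (T x) | x. normA A x = 1}"

definition omegaA :: "('a::chilbert \<Rightarrow> 'a) \<Rightarrow> ('a \<Rightarrow> 'a) \<Rightarrow> real" where
  "omegaA A T = Sup {cmod (cinnerA A (T x) x) | x. normA A x = 1}"

end

theory Submission
  imports Defs
begin

text \<open>For an A-unit vector \<open>x\<close> and A-selfadjoint \<open>T\<close>, \<open>S\<close> the numbers
  \<open>a = \<langle>Tx,x\<rangle>\<^sub>A\<close> and \<open>b = \<langle>Sx,x\<rangle>\<^sub>A\<close> are real. Hence
  \<open>|\<langle>(T+S)x,x\<rangle>\<^sub>A|\<^sup>2 = (a+b)\<^sup>2 = |\<langle>(T+iS)x,x\<rangle>\<^sub>A|\<^sup>2 + 2ab\<close>, and Buzano's inequality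
  bounds \<open>2|ab| = 2|\<langle>Tx,x\<rangle>\<^sub>A \<langle>x,Sx\<rangle>\<^sub>A|\<close> by
  \<open>|\<langle>Tx,Sx\<rangle>\<^sub>A| + \<parallel>Tx\<parallel>\<^sub>A \<parallel>Sx\<parallel>\<^sub>A = |\<langle>STx,x\<rangle>\<^sub>A| + \<parallel>Tx\<parallel>\<^sub>A \<parallel>Sx\<parallel>\<^sub>A\<close>.
  The second inequality follows from \<open>\<omega>\<^sub>A(T+iS)\<^sup>2 \<le> \<omega>\<^sub>A(T)\<^sup>2 + \<omega>\<^sub>A(S)\<^sup>2\<close>,
  \<open>\<omega>\<^sub>A(ST) \<le> \<parallel>T\<parallel>\<^sub>A \<parallel>S\<parallel>\<^sub>A\<close> and \<open>\<parallel>T\<parallel>\<^sub>A \<le> \<omega>\<^sub>A(T)\<close>, the last by polarization.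

  All suprema involved are finite because a bounded A-selfadjoint operator is A-bounded:
  \<open>\<parallel>Tx\<parallel>\<^sub>A\<^bsup>2\<^sup>n\<^esup> \<le> \<parallel>T\<^bsup>2\<^sup>n\<^esup>x\<parallel>\<^sub>A\<close> for A-unit \<open>x\<close>, while the right-hand side grows at most
  like \<open>\<parallel>T\<parallel>\<^bsup>2\<^sup>n\<^esup>\<close>.\<close>

lemma scaleC_zero_left [simp]: "(0::complex) *\<^sub>C (x::'a::chilbert) = 0"
  using scaleC_add_left[of 0 0 x] by simp

lemma scaleC_minus_left: "(- c) *\<^sub>C (x::'a::chilbert) = - (c *\<^sub>C x)"
  using scaleC_add_left[of "- c" c x] by (simp add: eq_neg_iff_add_eq_0)

lemma cinner_add_right: "cinner (x::'a::chilbert) (y + z) = cinner x y + cinner x z"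
  by (metis cinner_conj cinner_add_left complex_cnj_add)

lemma cinner_scaleC_right: "cinner (x::'a::chilbert) (c *\<^sub>C y) = cnj c * cinner x y"
  by (metis cinner_conj cinner_scaleC_left complex_cnj_mult)

lemma cinner_minus_left: "cinner (- (x::'a::chilbert)) y = - cinner x y"
  using cinner_scaleC_left[of "- 1" x y] by (simp add: scaleC_minus_left scaleC_one)

lemma cinner_diff_left: "cinner ((x::'a::chilbert) - y) z = cinner x z - cinner y z"
  using cinner_add_left[of x "- y" z] by (simp add: cinner_minus_left)

lemma cinner_diff_right: "cinner (x::'a::chilbert) (y - z) = cinner x y - cinner x z"
  by (metis cinner_conj cinner_diff_left complex_cnj_diff)

lemma hnorm_nonneg: "0 \<le> hnorm x"
  unfolding hnorm_def by (simp add: cinner_self_nonneg)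

lemma bounded_op_add: "bounded_op T \<Longrightarrow> T (x + y) = T x + T y"
  unfolding bounded_op_def by blast

lemma bounded_op_scaleC: "bounded_op T \<Longrightarrow> T (c *\<^sub>C x) = c *\<^sub>C T x"
  unfolding bounded_op_def by blast

lemma bounded_op_diff: "bounded_op T \<Longrightarrow> T (x - y) = T x - T y"
  using bounded_op_scaleC[of T "- 1" y] bounded_op_add[of T x "- y"]
  by (simp add: scaleC_minus_left scaleC_one)

lemma bounded_op_bound:
  assumes "bounded_op T"
  shows "\<exists>K\<ge>1. \<forall>x. hnorm (T x) \<le> K * hnorm x"
proof -
  obtain K where K: "\<And>x. hnorm (T x) \<le> K * hnorm x"
    using assms unfolding bounded_op_def by blast
  have "hnorm (T x) \<le> max K 1 * hnorm x" for x
    using K[of x] mult_right_mono[OF max.cobounded1 hnorm_nonneg] by (rule order.trans)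
  then show ?thesis by (intro exI[of _ "max K 1"]) simp
qed

lemma hnorm_funpow_le:
  fixes T :: "'a::chilbert \<Rightarrow> 'a"
  assumes "\<And>x. hnorm (T x) \<le> K * hnorm x" and "0 \<le> K"
  shows "hnorm ((T ^^ n) x) \<le> K ^ n * hnorm x"
proof (induction n)
  case (Suc n)
  have "hnorm ((T ^^ Suc n) x) = hnorm (T ((T ^^ n) x))" by simp
  also have "\<dots> \<le> K * hnorm ((T ^^ n) x)" by (rule assms(1))
  also have "\<dots> \<le> K * (K ^ n * hnorm x)" using Suc assms(2) by (rule mult_left_mono)
  finally show ?case by (simp add: mult.assoc)
qed simp

lemma le_one_if_pow2_powers_bounded:
  fixes r :: real
  assumes "\<And>n. r ^ (2 ^ n) \<le> C"
  shows "r \<le> 1"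
proof (rule ccontr)
  assume "\<not> r \<le> 1"
  then have "1 < r" by simp
  then obtain n where "C < r ^ n" using real_arch_pow by blast
  also have "r ^ n \<le> r ^ (2 ^ n)" using \<open>1 < r\<close> by (intro power_increasing) (simp_all add: less_imp_le)
  finally show False using assms[of n] by simp
qed

lemma mult_le_if_quadratic_nonneg:
  fixes a b p :: real
  assumes quadratic: "\<And>t. 0 \<le> a - 2 * t * p + t\<^sup>2 * p * b" and "0 \<le> p" and "0 \<le> b"
  shows "p \<le> a * b"
proof (cases "b = 0")
  case True
  show ?thesis
  proof (rule ccontr)
    assume "\<not> p \<le> a * b"
    then have "0 < p" using True by simp
    have "0 \<le> a - 2 * ((a + 1) / (2 * p)) * p" using quadratic[of "(a + 1) / (2 * p)"] True by simp
    also have "\<dots> = - 1" using \<open>0 < p\<close> by (simp add: field_simps)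
    finally show False by simp
  qed
next
  case False
  then have "0 < b" using \<open>0 \<le> b\<close> by simp
  have "0 \<le> a - 2 * (1 / b) * p + (1 / b)\<^sup>2 * p * b" by (rule quadratic)
  also have "\<dots> = (a * b - p) / b" using \<open>0 < b\<close> by (simp add: field_simps power2_eq_square)
  finally show ?thesis using \<open>0 < b\<close> by (simp add: zero_le_divide_iff)
qed

lemma le_opnormA:
  assumes "\<And>y. normA A y = 1 \<Longrightarrow> normA A (T y) \<le> K" and "normA A x = 1"
  shows "normA A (T x) \<le> opnormA A T"
  unfolding opnormA_def using assms by (intro cSup_upper bdd_aboveI[of _ K]) auto

lemma opnormA_le:
  assumes "\<exists>x. normA A x = 1" and "\<And>x. normA A x = 1 \<Longrightarrow> normA A (T x) \<le> K"
  shows "opnormA A T \<le> K"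
  unfolding opnormA_def using assms by (intro cSup_least) auto

lemma le_omegaA:
  assumes "\<And>y. normA A y = 1 \<Longrightarrow> cmod (cinnerA A (T y) y) \<le> K" and "normA A x = 1"
  shows "cmod (cinnerA A (T x) x) \<le> omegaA A T"
  unfolding omegaA_def using assms by (intro cSup_upper bdd_aboveI[of _ K]) auto

lemma omegaA_le:
  assumes "\<exists>x. normA A x = 1" and "\<And>x. normA A x = 1 \<Longrightarrow> cmod (cinnerA A (T x) x) \<le> K"
  shows "omegaA A T \<le> K"
  unfolding omegaA_def using assms by (intro cSup_least) auto

locale positive_operator =
  fixes A :: "'a::chilbert \<Rightarrow> 'a"
  assumes positive: "positive_op A"
begin

lemma bounded: "bounded_op A"
  using positive unfolding positive_op_def by blast

lemma cinnerA_add_left: "cinnerA A (x + y) z = cinnerA A x z + cinnerA A y z"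
  unfolding cinnerA_def by (simp add: bounded_op_add[OF bounded] cinner_add_left)

lemma cinnerA_scaleC_left: "cinnerA A (c *\<^sub>C x) y = c * cinnerA A x y"
  unfolding cinnerA_def by (simp add: bounded_op_scaleC[OF bounded] cinner_scaleC_left)

lemma cinnerA_diff_left: "cinnerA A (x - y) z = cinnerA A x z - cinnerA A y z"
  unfolding cinnerA_def by (simp add: bounded_op_diff[OF bounded] cinner_diff_left)

lemma cinnerA_add_right: "cinnerA A x (y + z) = cinnerA A x y + cinnerA A x z"
  unfolding cinnerA_def by (rule cinner_add_right)

lemma cinnerA_scaleC_right: "cinnerA A x (c *\<^sub>C y) = cnj c * cinnerA A x y"
  unfolding cinnerA_def by (rule cinner_scaleC_right)

lemma cinnerA_diff_right: "cinnerA A x (y - z) = cinnerA A x y - cinnerA A x z"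
  unfolding cinnerA_def by (rule cinner_diff_right)

lemmas cinnerA_linear =
  cinnerA_add_left cinnerA_scaleC_left cinnerA_diff_left
  cinnerA_add_right cinnerA_scaleC_right cinnerA_diff_right

lemma Re_cinnerA_self_nonneg: "0 \<le> Re (cinnerA A x x)"
  using positive unfolding positive_op_def cinnerA_def by blast

lemma Im_cinnerA_self: "Im (cinnerA A x x) = 0"
  using positive unfolding positive_op_def cinnerA_def by blast

lemma normA_nonneg: "0 \<le> normA A x"
  unfolding normA_def by (simp add: Re_cinnerA_self_nonneg)

lemma normA_sq: "(normA A x)\<^sup>2 = Re (cinnerA A x x)"
  unfolding normA_def by (simp add: Re_cinnerA_self_nonneg)

lemma cinnerA_self: "cinnerA A x x = of_real ((normA A x)\<^sup>2)"
  by (simp add: normA_sq Im_cinnerA_self complex_eq_iff)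

lemma cinnerA_commute: "cinnerA A y x = cnj (cinnerA A x y)"
proof -
  have "cinnerA A (x + y) (x + y) = cinnerA A x x + cinnerA A x y + cinnerA A y x + cinnerA A y y"
    and "cinnerA A (x + \<i> *\<^sub>C y) (x + \<i> *\<^sub>C y)
      = cinnerA A x x - \<i> * cinnerA A x y + \<i> * cinnerA A y x + cinnerA A y y"
    by (simp_all add: cinnerA_linear algebra_simps)
  then have "Im (cinnerA A x y + cinnerA A y x) = 0"
    and "Re (cinnerA A y x) - Re (cinnerA A x y) = 0"
    using Im_cinnerA_self[of "x + y"] Im_cinnerA_self[of "x + \<i> *\<^sub>C y"]
      Im_cinnerA_self[of x] Im_cinnerA_self[of y]
    by simp_all
  then show ?thesis by (simp add: complex_eq_iff)
qed

lemma cauchy_schwarz: "cmod (cinnerA A x y) \<le> normA A x * normA A y"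
proof -
  define p where "p = (cmod (cinnerA A x y))\<^sup>2"
  have square: "cinnerA A x y * cnj (cinnerA A x y) = of_real p"
    unfolding p_def by (rule complex_norm_square[symmetric])
  have "0 \<le> (normA A x)\<^sup>2 - 2 * t * p + t\<^sup>2 * p * (normA A y)\<^sup>2" for t
  proof -
    define c where "c = of_real t * cinnerA A x y"
    have "cinnerA A (x - c *\<^sub>C y) (x - c *\<^sub>C y)
        = cinnerA A x x - cnj c * cinnerA A x y - c * cinnerA A y x + c * cnj c * cinnerA A y y"
      by (simp add: cinnerA_linear algebra_simps)
    also have "\<dots> = of_real ((normA A x)\<^sup>2 - 2 * t * p + t\<^sup>2 * p * (normA A y)\<^sup>2)"
      unfolding c_def cinnerA_self[of x] cinnerA_self[of y] cinnerA_commute[of y x]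
      by (simp add: square[symmetric] algebra_simps power2_eq_square)
    finally show ?thesis using Re_cinnerA_self_nonneg[of "x - c *\<^sub>C y"] by simp
  qed
  then have "p \<le> (normA A x)\<^sup>2 * (normA A y)\<^sup>2"
    by (rule mult_le_if_quadratic_nonneg) (simp_all add: p_def)
  then show ?thesis
    unfolding p_def by (simp add: power2_le_iff_abs_le normA_nonneg power_mult_distrib[symmetric])
qed

lemma normA_scaleC: "normA A (c *\<^sub>C x) = cmod c * normA A x"
proof -
  have "cinnerA A (c *\<^sub>C x) (c *\<^sub>C x) = (c * cnj c) * cinnerA A x x"
    by (simp add: cinnerA_linear algebra_simps)
  then have "(normA A (c *\<^sub>C x))\<^sup>2 = (cmod c * normA A x)\<^sup>2"
    by (simp add: normA_sq complex_norm_square[symmetric] power_mult_distrib)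
  then show ?thesis by (simp add: normA_nonneg power2_eq_iff_nonneg)
qed

lemma normA_normalize: "normA A x \<noteq> 0 \<Longrightarrow> normA A (of_real (1 / normA A x) *\<^sub>C x) = 1"
  by (simp add: normA_scaleC norm_divide normA_nonneg)

lemma ex_normA_eq_1:
  assumes "A \<noteq> (\<lambda>x. 0)"
  shows "\<exists>x. normA A x = 1"
proof -
  obtain x where x: "A x \<noteq> 0" using assms by blast
  have "normA A x \<noteq> 0"
  proof
    assume "normA A x = 0"
    then have "cinner (A x) (A x) = 0"
      using cauchy_schwarz[of x "A x"] unfolding cinnerA_def by simp
    then show False using x cinner_self_eq_zero by blast
  qed
  then show ?thesis using normA_normalize by blast
qed

lemma buzano_inequality:
  assumes "normA A e = 1"
  shows "2 * cmod (cinnerA A u e * cinnerA A e v) \<le> cmod (cinnerA A u v) + normA A u * normA A v"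
proof -
  define w where "w = cinnerA A v e"
  define r where "r = (2 * w) *\<^sub>C e - v"
  have ee: "cinnerA A e e = 1" using cinnerA_self[of e] assms by simp
  have ev: "cinnerA A e v = cnj w" unfolding w_def by (rule cinnerA_commute)
  \<comment> \<open>\<open>r\<close> is the reflection of \<open>v\<close> in the line through \<open>e\<close>, so it has the same A-norm\<close>
  have "cinnerA A r r = cinnerA A v v"
    unfolding r_def by (simp add: cinnerA_linear ee ev w_def[symmetric] algebra_simps)
  then have "(normA A r)\<^sup>2 = (normA A v)\<^sup>2"
    by (simp add: normA_sq)
  then have r: "normA A r = normA A v"
    by (simp add: normA_nonneg power2_eq_iff_nonneg)
  have "2 * (cinnerA A u e * cinnerA A e v) = cinnerA A u v + cinnerA A u r"
    unfolding r_def ev by (simp add: cinnerA_linear algebra_simps)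
  then have "2 * cmod (cinnerA A u e * cinnerA A e v) = cmod (cinnerA A u v + cinnerA A u r)"
    by (metis norm_mult norm_numeral)
  also have "\<dots> \<le> cmod (cinnerA A u v) + cmod (cinnerA A u r)"
    by (rule norm_triangle_ineq)
  also have "\<dots> \<le> cmod (cinnerA A u v) + normA A u * normA A v"
    using cauchy_schwarz[of u r] r by simp
  finally show ?thesis .
qed

lemma parallelogram:
  "(normA A (x + y))\<^sup>2 + (normA A (x - y))\<^sup>2 = 2 * (normA A x)\<^sup>2 + 2 * (normA A y)\<^sup>2"
  by (simp add: normA_sq cinnerA_linear)

end

interpretation identity_op: positive_operator "\<lambda>x. x"
  by unfold_locales
    (auto simp: positive_op_def bounded_op_def cinner_self_real cinner_self_nonneg intro: exI[of _ 1])

lemma cauchy_schwarz_hnorm: "cmod (cinner x y) \<le> hnorm x * hnorm (y::'a::chilbert)"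
  using identity_op.cauchy_schwarz[of x y] unfolding normA_def hnorm_def cinnerA_def .

context positive_operator
begin

lemma normA_le_hnorm: "\<exists>C\<ge>0. \<forall>x. normA A x \<le> C * hnorm x"
proof -
  obtain K where "1 \<le> K" and K: "\<And>x. hnorm (A x) \<le> K * hnorm x"
    using bounded_op_bound[OF bounded] by blast
  have "normA A x \<le> sqrt K * hnorm x" for x
  proof (rule power2_le_imp_le)
    have "(normA A x)\<^sup>2 = Re (cinner (A x) x)"
      unfolding normA_sq cinnerA_def ..
    also have "\<dots> \<le> cmod (cinner (A x) x)" by (rule complex_Re_le_cmod)
    also have "\<dots> \<le> hnorm (A x) * hnorm x" by (rule cauchy_schwarz_hnorm)
    also have "\<dots> \<le> K * hnorm x * hnorm x" by (rule mult_right_mono[OF K hnorm_nonneg])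
    also have "\<dots> = (sqrt K * hnorm x)\<^sup>2"
      using \<open>1 \<le> K\<close> by (simp add: power_mult_distrib power2_eq_square)
    finally show "(normA A x)\<^sup>2 \<le> (sqrt K * hnorm x)\<^sup>2" .
    show "0 \<le> sqrt K * hnorm x" using \<open>1 \<le> K\<close> by (simp add: hnorm_nonneg)
  qed
  then show ?thesis using \<open>1 \<le> K\<close> by (intro exI[of _ "sqrt K"]) simp
qed

lemma cinnerA_selfadjoint:
  assumes "A_selfadjoint A T"
  shows "cinnerA A (T x) y = cinnerA A x (T y)"
proof -
  have "cinnerA A (T x) y = cinner x (A (T y))"
    using assms unfolding A_selfadjoint_def cinnerA_def by blast
  also have "\<dots> = cnj (cinnerA A (T y) x)"
    unfolding cinnerA_def by (rule cinner_conj)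
  also have "\<dots> = cinnerA A x (T y)"
    by (simp add: cinnerA_commute[of x "T y"])
  finally show ?thesis .
qed

lemma Im_cinnerA_selfadjoint:
  assumes "A_selfadjoint A T"
  shows "Im (cinnerA A (T x) x) = 0"
proof -
  have "cinnerA A (T x) x = cinnerA A x (T x)" by (rule cinnerA_selfadjoint[OF assms])
  also have "\<dots> = cnj (cinnerA A (T x) x)" by (rule cinnerA_commute)
  finally show ?thesis by (simp add: complex_eq_iff)
qed

lemma cinnerA_funpow_selfadjoint:
  assumes "A_selfadjoint A T"
  shows "cinnerA A ((T ^^ n) x) y = cinnerA A x ((T ^^ n) y)"
proof (induction n arbitrary: x y)
  case (Suc n)
  have "cinnerA A ((T ^^ Suc n) x) y = cinnerA A ((T ^^ n) x) (T y)"
    by (simp add: cinnerA_selfadjoint[OF assms])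
  also have "\<dots> = cinnerA A x ((T ^^ Suc n) y)" by (simp add: Suc funpow_swap1)
  finally show ?case .
qed simp

lemma normA_pow2_le_normA_funpow:
  assumes "A_selfadjoint A T" and x: "normA A x = 1"
  shows "normA A (T x) ^ (2 ^ n) \<le> normA A ((T ^^ (2 ^ n)) x)"
proof (induction n)
  case (Suc n)
  \<comment> \<open>\<open>\<parallel>T\<^sup>m x\<parallel>\<^sub>A\<^sup>2 = \<langle>T\<^bsup>2m\<^esup> x, x\<rangle>\<^sub>A \<le> \<parallel>T\<^bsup>2m\<^esup> x\<parallel>\<^sub>A\<close> with \<open>m = 2\<^sup>n\<close>\<close>
  let ?m = "2 ^ n :: nat"
  have "normA A (T x) ^ (2 ^ Suc n) = (normA A (T x) ^ ?m)\<^sup>2"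
    by (simp add: power_mult[symmetric] mult.commute)
  also have "\<dots> \<le> (normA A ((T ^^ ?m) x))\<^sup>2"
    using Suc by (simp add: power_mono normA_nonneg)
  also have "\<dots> = Re (cinnerA A ((T ^^ ?m) ((T ^^ ?m) x)) x)"
    unfolding cinnerA_funpow_selfadjoint[OF assms(1), of ?m "(T ^^ ?m) x" x] by (rule normA_sq)
  also have "(T ^^ ?m) ((T ^^ ?m) x) = (T ^^ (2 ^ Suc n)) x"
    by (simp add: mult_2 funpow_add)
  also have "Re (cinnerA A ((T ^^ (2 ^ Suc n)) x) x) \<le> normA A ((T ^^ (2 ^ Suc n)) x)"
    using complex_Re_le_cmod[of "cinnerA A ((T ^^ (2 ^ Suc n)) x) x"]
      cauchy_schwarz[of "(T ^^ (2 ^ Suc n)) x" x] x by simp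
  finally show ?case .
qed simp

lemma A_selfadjoint_normA_bounded:
  assumes "A_selfadjoint A T" and "bounded_op T"
  shows "\<exists>K. \<forall>x. normA A x = 1 \<longrightarrow> normA A (T x) \<le> K"
proof -
  obtain K where "1 \<le> K" and K: "\<And>x. hnorm (T x) \<le> K * hnorm x"
    using bounded_op_bound[OF assms(2)] by blast
  obtain C where "0 \<le> C" and C: "\<And>x. normA A x \<le> C * hnorm x"
    using normA_le_hnorm by blast
  have "normA A (T x) \<le> K" if x: "normA A x = 1" for x
  proof -
    have "normA A (T x) / K \<le> 1"
    proof (rule le_one_if_pow2_powers_bounded)
      fix n
      have "normA A (T x) ^ (2 ^ n) \<le> C * hnorm ((T ^^ (2 ^ n)) x)"
        using normA_pow2_le_normA_funpow[OF assms(1) x] C by (rule order.trans)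
      also have "\<dots> \<le> C * (K ^ (2 ^ n) * hnorm x)"
        using hnorm_funpow_le[OF K] \<open>1 \<le> K\<close> \<open>0 \<le> C\<close> by (simp add: mult_left_mono)
      finally show "(normA A (T x) / K) ^ (2 ^ n) \<le> C * hnorm x"
        using \<open>1 \<le> K\<close> by (simp add: power_divide pos_divide_le_eq mult_ac)
    qed
    then show ?thesis using \<open>1 \<le> K\<close> by simp
  qed
  then show ?thesis by blast
qed

lemma A_selfadjoint_le_opnormA:
  assumes "A_selfadjoint A T" and "bounded_op T" and "normA A x = 1"
  shows "normA A (T x) \<le> opnormA A T"
proof -
  obtain K where "\<And>y. normA A y = 1 \<Longrightarrow> normA A (T y) \<le> K"
    using A_selfadjoint_normA_bounded[OF assms(1,2)] by blast
  then show ?thesis using assms(3) by (rule le_opnormA)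
qed

lemma A_selfadjoint_le_omegaA:
  assumes "A_selfadjoint A T" and "bounded_op T" and "normA A x = 1"
  shows "cmod (cinnerA A (T x) x) \<le> omegaA A T"
proof -
  obtain K where K: "\<And>y. normA A y = 1 \<Longrightarrow> normA A (T y) \<le> K"
    using A_selfadjoint_normA_bounded[OF assms(1,2)] by blast
  have "cmod (cinnerA A (T y) y) \<le> K" if "normA A y = 1" for y
    using cauchy_schwarz[of "T y" y] K[OF that] that by simp
  then show ?thesis using assms(3) by (rule le_omegaA)
qed

lemma opnormA_nonneg:
  assumes "A \<noteq> (\<lambda>x. 0)" and "A_selfadjoint A T" and "bounded_op T"
  shows "0 \<le> opnormA A T"
proof -
  obtain x where x: "normA A x = 1" using ex_normA_eq_1[OF assms(1)] by blast
  have "0 \<le> normA A (T x)" by (rule normA_nonneg)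
  also have "\<dots> \<le> opnormA A T" by (rule A_selfadjoint_le_opnormA[OF assms(2,3) x])
  finally show ?thesis .
qed

lemma cmod_cinnerA_le_normA_sq:
  assumes "bounded_op T" and bound: "\<And>y. normA A y = 1 \<Longrightarrow> cmod (cinnerA A (T y) y) \<le> w"
  shows "cmod (cinnerA A (T z) z) \<le> w * (normA A z)\<^sup>2"
proof (cases "normA A z = 0")
  case True
  then show ?thesis using cauchy_schwarz[of "T z" z] by simp
next
  case False
  then have "0 < normA A z" using normA_nonneg[of z] by simp
  define c where "c = (of_real (1 / normA A z) :: complex)"
  have "cinnerA A (T (c *\<^sub>C z)) (c *\<^sub>C z) = (c * cnj c) * cinnerA A (T z) z"
    by (simp add: bounded_op_scaleC[OF assms(1)] cinnerA_linear algebra_simps)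
  then have "cmod (cinnerA A (T z) z) / (normA A z)\<^sup>2 = cmod (cinnerA A (T (c *\<^sub>C z)) (c *\<^sub>C z))"
    using \<open>0 < normA A z\<close> unfolding c_def by (simp add: norm_mult norm_divide power2_eq_square)
  also have "\<dots> \<le> w"
    unfolding c_def by (rule bound[OF normA_normalize[OF False]])
  finally show ?thesis using \<open>0 < normA A z\<close> by (simp add: pos_divide_le_eq)
qed

lemma A_selfadjoint_normA_le_numerical_bound:
  assumes "bounded_op T" and "A_selfadjoint A T"
    and bound: "\<And>y. normA A y = 1 \<Longrightarrow> cmod (cinnerA A (T y) y) \<le> w"
    and x: "normA A x = 1"
  shows "normA A (T x) \<le> w"
proof (cases "normA A (T x) = 0")
  case True
  have "0 \<le> w" using norm_ge_zero bound[OF x] by (rule order.trans)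
  with True show ?thesis by simp
next
  case False
  \<comment> \<open>Polarization with the A-unit vector \<open>y\<close> in the direction of \<open>T x\<close>, for which
    \<open>\<langle>T x, y\<rangle>\<^sub>A = \<langle>T y, x\<rangle>\<^sub>A = \<parallel>T x\<parallel>\<^sub>A\<close>\<close>
  define t where "t = normA A (T x)"
  define y where "y = of_real (1 / t) *\<^sub>C T x"
  have y: "normA A y = 1" unfolding y_def t_def by (rule normA_normalize[OF False])
  have xy: "cinnerA A (T x) y = of_real t"
    unfolding y_def t_def by (simp add: cinnerA_linear cinnerA_self power2_eq_square)
  have "cinnerA A (T (x + y)) (x + y) - cinnerA A (T (x - y)) (x - y)
      = 2 * cinnerA A (T x) y + 2 * cinnerA A (T y) x"
    by (simp add: bounded_op_add[OF assms(1)] bounded_op_diff[OF assms(1)] cinnerA_linear)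
  also have "\<dots> = of_real (4 * t)"
  proof -
    have "cinnerA A (T y) x = cnj (cinnerA A (T x) y)"
      using cinnerA_selfadjoint[OF assms(2), of y x] cinnerA_commute[of "T x" y] by simp
    then show ?thesis using xy by simp
  qed
  finally have "4 * t = Re (cinnerA A (T (x + y)) (x + y) - cinnerA A (T (x - y)) (x - y))"
    by simp
  also have "\<dots> \<le> cmod (cinnerA A (T (x + y)) (x + y) - cinnerA A (T (x - y)) (x - y))"
    by (rule complex_Re_le_cmod)
  also have "\<dots> \<le> cmod (cinnerA A (T (x + y)) (x + y)) + cmod (cinnerA A (T (x - y)) (x - y))"
    by (rule norm_triangle_ineq4)
  also have "\<dots> \<le> w * (normA A (x + y))\<^sup>2 + w * (normA A (x - y))\<^sup>2"
    by (intro add_mono cmod_cinnerA_le_normA_sq[OF assms(1) bound])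
  also have "\<dots> = w * ((normA A (x + y))\<^sup>2 + (normA A (x - y))\<^sup>2)"
    by (rule distrib_left[symmetric])
  also have "\<dots> = 4 * w"
    using x y by (simp add: parallelogram)
  finally show ?thesis unfolding t_def by simp
qed

lemma opnormA_le_omegaA:
  assumes "A \<noteq> (\<lambda>x. 0)" and "A_selfadjoint A T" and "bounded_op T"
  shows "opnormA A T \<le> omegaA A T"
proof (rule opnormA_le)
  show "\<exists>x. normA A x = 1" by (rule ex_normA_eq_1[OF assms(1)])
  show "normA A (T x) \<le> omegaA A T" if "normA A x = 1" for x
    using assms(3,2) A_selfadjoint_le_omegaA[OF assms(2,3)] that by (rule A_selfadjoint_normA_le_numerical_bound)
qed

lemma cinnerA_add_selfadjoint:
  assumes "A_selfadjoint A T" and "A_selfadjoint A S"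
  shows "cinnerA A (T x + S x) x = of_real (Re (cinnerA A (T x) x) + Re (cinnerA A (S x) x))"
    and "cinnerA A (T x + \<i> *\<^sub>C S x) x = Complex (Re (cinnerA A (T x) x)) (Re (cinnerA A (S x) x))"
  using Im_cinnerA_selfadjoint[OF assms(1), of x] Im_cinnerA_selfadjoint[OF assms(2), of x]
  by (simp_all add: cinnerA_add_left cinnerA_scaleC_left complex_eq_iff)

lemma cmod_cinnerA_add_sq_le:
  assumes T: "A_selfadjoint A T" and S: "A_selfadjoint A S" and x: "normA A x = 1"
  shows "(cmod (cinnerA A (T x + S x) x))\<^sup>2
    \<le> (cmod (cinnerA A (T x + \<i> *\<^sub>C S x) x))\<^sup>2 + cmod (cinnerA A (S (T x)) x)
      + normA A (T x) * normA A (S x)"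
proof -
  define a b where "a = Re (cinnerA A (T x) x)" and "b = Re (cinnerA A (S x) x)"
  have Tx: "cinnerA A (T x) x = of_real a"
    using Im_cinnerA_selfadjoint[OF T, of x] unfolding a_def by (simp add: complex_eq_iff)
  have Sx: "cinnerA A x (S x) = of_real b"
    using Im_cinnerA_selfadjoint[OF S, of x] cinnerA_commute[of "S x" x]
    unfolding b_def by (simp add: complex_eq_iff)
  have "2 * \<bar>a * b\<bar> = 2 * cmod (cinnerA A (T x) x * cinnerA A x (S x))"
    by (simp add: Tx Sx norm_mult abs_mult)
  also have "\<dots> \<le> cmod (cinnerA A (T x) (S x)) + normA A (T x) * normA A (S x)"
    by (rule buzano_inequality[OF x])
  also have "cinnerA A (T x) (S x) = cinnerA A (S (T x)) x"
    by (rule cinnerA_selfadjoint[OF S, symmetric])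
  finally have ab: "2 * \<bar>a * b\<bar> \<le> cmod (cinnerA A (S (T x)) x) + normA A (T x) * normA A (S x)" .
  have "(cmod (cinnerA A (T x + S x) x))\<^sup>2
      = (cmod (cinnerA A (T x + \<i> *\<^sub>C S x) x))\<^sup>2 + 2 * (a * b)"
    by (simp add: cinnerA_add_selfadjoint[OF T S] a_def[symmetric] b_def[symmetric]
        cmod_power2 power2_sum)
  moreover have "a * b \<le> \<bar>a * b\<bar>" by (rule abs_ge_self)
  ultimately show ?thesis using ab by linarith
qed

lemma cmod_cinnerA_add_iscaleC_le:
  assumes "A_selfadjoint A T" "bounded_op T" and "A_selfadjoint A S" "bounded_op S"
    and x: "normA A x = 1"
  shows "cmod (cinnerA A (T x + \<i> *\<^sub>C S x) x) \<le> sqrt ((omegaA A T)\<^sup>2 + (omegaA A S)\<^sup>2)"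
proof -
  have "\<bar>Re (cinnerA A (T x) x)\<bar> \<le> omegaA A T"
    using abs_Re_le_cmod A_selfadjoint_le_omegaA[OF assms(1,2) x] by (rule order.trans)
  then have "(Re (cinnerA A (T x) x))\<^sup>2 \<le> (omegaA A T)\<^sup>2"
    by (simp add: power2_le_iff_abs_le[OF order.trans[OF abs_ge_zero]])
  moreover have "\<bar>Re (cinnerA A (S x) x)\<bar> \<le> omegaA A S"
    using abs_Re_le_cmod A_selfadjoint_le_omegaA[OF assms(3,4) x] by (rule order.trans)
  then have "(Re (cinnerA A (S x) x))\<^sup>2 \<le> (omegaA A S)\<^sup>2"
    by (simp add: power2_le_iff_abs_le[OF order.trans[OF abs_ge_zero]])
  ultimately show ?thesis
    by (simp add: cinnerA_add_selfadjoint[OF assms(1,3)] cmod_def)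
qed

lemma cmod_cinnerA_comp_le:
  assumes T: "A_selfadjoint A T" "bounded_op T" and S: "A_selfadjoint A S" "bounded_op S"
    and x: "normA A x = 1"
  shows "cmod (cinnerA A (S (T x)) x) \<le> opnormA A T * opnormA A S"
proof -
  have "cmod (cinnerA A (S (T x)) x) = cmod (cinnerA A (T x) (S x))"
    by (simp add: cinnerA_selfadjoint[OF S(1)])
  also have "\<dots> \<le> normA A (T x) * normA A (S x)" by (rule cauchy_schwarz)
  also have "\<dots> \<le> opnormA A T * opnormA A S"
    using A_selfadjoint_le_opnormA[OF T x] A_selfadjoint_le_opnormA[OF S x]
      order.trans[OF normA_nonneg A_selfadjoint_le_opnormA[OF T x]] normA_nonneg
    by (rule mult_mono)
  finally show ?thesis .
qed

lemma omegaA_add_le: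
  assumes "A \<noteq> (\<lambda>x. 0)"
    and T: "A_selfadjoint A T" "bounded_op T" and S: "A_selfadjoint A S" "bounded_op S"
  shows "omegaA A (\<lambda>x. T x + S x)
    \<le> sqrt ((omegaA A (\<lambda>x. T x + \<i> *\<^sub>C S x))\<^sup>2 + omegaA A (\<lambda>x. S (T x))
      + opnormA A T * opnormA A S)"
proof (rule omegaA_le)
  show "\<exists>x. normA A x = 1" by (rule ex_normA_eq_1[OF assms(1)])
  fix x
  assume x: "normA A x = 1"
  have "(cmod (cinnerA A (T x + S x) x))\<^sup>2
    \<le> (cmod (cinnerA A (T x + \<i> *\<^sub>C S x) x))\<^sup>2 + cmod (cinnerA A (S (T x)) x)
      + normA A (T x) * normA A (S x)"
    by (rule cmod_cinnerA_add_sq_le[OF T(1) S(1) x])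
  also have "\<dots> \<le> (omegaA A (\<lambda>x. T x + \<i> *\<^sub>C S x))\<^sup>2 + omegaA A (\<lambda>x. S (T x))
      + opnormA A T * opnormA A S"
  proof (intro add_mono power_mono mult_mono)
    show "cmod (cinnerA A (T x + \<i> *\<^sub>C S x) x) \<le> omegaA A (\<lambda>x. T x + \<i> *\<^sub>C S x)"
      using cmod_cinnerA_add_iscaleC_le[OF T S] x by (rule le_omegaA)
    show "cmod (cinnerA A (S (T x)) x) \<le> omegaA A (\<lambda>x. S (T x))"
      using cmod_cinnerA_comp_le[OF T S] x by (rule le_omegaA)
    show "normA A (T x) \<le> opnormA A T" "normA A (S x) \<le> opnormA A S"
      using A_selfadjoint_le_opnormA T S x by blast+
    show "0 \<le> opnormA A T" by (rule opnormA_nonneg[OF assms(1) T])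
  qed (simp_all add: normA_nonneg)
  finally show "cmod (cinnerA A (T x + S x) x)
    \<le> sqrt ((omegaA A (\<lambda>x. T x + \<i> *\<^sub>C S x))\<^sup>2 + omegaA A (\<lambda>x. S (T x))
      + opnormA A T * opnormA A S)"
    by (rule real_le_rsqrt)
qed

lemma sqrt_le_omegaA_add:
  assumes "A \<noteq> (\<lambda>x. 0)"
    and T: "A_selfadjoint A T" "bounded_op T" and S: "A_selfadjoint A S" "bounded_op S"
  shows "sqrt ((omegaA A (\<lambda>x. T x + \<i> *\<^sub>C S x))\<^sup>2 + omegaA A (\<lambda>x. S (T x))
      + opnormA A T * opnormA A S)
    \<le> omegaA A T + omegaA A S"
proof (rule real_le_lsqrt)
  have unit: "\<exists>x. normA A x = 1" by (rule ex_normA_eq_1[OF assms(1)])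
  then obtain x where x: "normA A x = 1" by blast
  have "0 \<le> omegaA A T" "0 \<le> omegaA A S"
    using order.trans[OF norm_ge_zero A_selfadjoint_le_omegaA[OF T x]]
      order.trans[OF norm_ge_zero A_selfadjoint_le_omegaA[OF S x]] .
  then show "0 \<le> omegaA A T + omegaA A S" by simp
  have "omegaA A (\<lambda>x. T x + \<i> *\<^sub>C S x) \<le> sqrt ((omegaA A T)\<^sup>2 + (omegaA A S)\<^sup>2)"
    using unit cmod_cinnerA_add_iscaleC_le[OF T S] by (rule omegaA_le)
  moreover have "0 \<le> omegaA A (\<lambda>x. T x + \<i> *\<^sub>C S x)"
    using norm_ge_zero le_omegaA[OF cmod_cinnerA_add_iscaleC_le[OF T S] x] by (rule order.trans)
  ultimately have "(omegaA A (\<lambda>x. T x + \<i> *\<^sub>C S x))\<^sup>2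
      \<le> (sqrt ((omegaA A T)\<^sup>2 + (omegaA A S)\<^sup>2))\<^sup>2"
    by (rule power_mono)
  then have "(omegaA A (\<lambda>x. T x + \<i> *\<^sub>C S x))\<^sup>2 \<le> (omegaA A T)\<^sup>2 + (omegaA A S)\<^sup>2"
    by simp
  moreover have "omegaA A (\<lambda>x. S (T x)) \<le> opnormA A T * opnormA A S"
    using unit cmod_cinnerA_comp_le[OF T S] by (rule omegaA_le)
  moreover have "opnormA A T * opnormA A S \<le> omegaA A T * omegaA A S"
    using opnormA_le_omegaA[OF assms(1) T] opnormA_le_omegaA[OF assms(1) S]
      opnormA_nonneg[OF assms(1) T] opnormA_nonneg[OF assms(1) S]
    by (intro mult_mono) simp_all
  ultimately show "(omegaA A (\<lambda>x. T x + \<i> *\<^sub>C S x))\<^sup>2 + omegaA A (\<lambda>x. S (T x))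
      + opnormA A T * opnormA A S \<le> (omegaA A T + omegaA A S)\<^sup>2"
    by (simp add: power2_sum)
qed

end

theorem theorem3p9:
  fixes A T S :: "'a::chilbert \<Rightarrow> 'a"
  assumes "positive_op A" and "A \<noteq> (\<lambda>x. 0)"
    and "T \<in> BA A" and "S \<in> BA A"
    and "A_selfadjoint A T" and "A_selfadjoint A S"
  shows "omegaA A (\<lambda>x. T x + S x)
           \<le> sqrt ((omegaA A (\<lambda>x. T x + \<i> *\<^sub>C S x))\<^sup>2 + omegaA A (\<lambda>x. S (T x))
                   + opnormA A T * opnormA A S)
       \<and> sqrt ((omegaA A (\<lambda>x. T x + \<i> *\<^sub>C S x))\<^sup>2 + omegaA A (\<lambda>x. S (T x))
                   + opnormA A T * opnormA A S)
           \<le> omegaA A T + omegaA A S"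
proof -
  interpret positive_operator A by (rule positive_operator.intro) (fact assms(1))
  have T: "A_selfadjoint A T" "bounded_op T" and S: "A_selfadjoint A S" "bounded_op S"
    using assms(3-6) unfolding BA_def by blast+
  show ?thesis
    using omegaA_add_le[OF assms(2) T S] sqrt_le_omegaA_add[OF assms(2) T S] by (rule conjI)
qed

end
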